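(* Let $n\ge4$ and let $\lambda=(a_1,\dots,a_n)$ (usual coordinates) be a dominant weight of $SL(n)$ all of whose coordinates $a_i$ are non-integers. If the multiset $\{a_1,\dots,a_n\}$ contains the three values $\alpha+1,\alpha,\alpha-1$ for some $\alpha\in\mathbb R$, then $M(\lambda)$ contains a non-saturated subset.
   Context: Setup for $SL(n)$: $\varepsilon_1,\dots,\varepsilon_n$ is the standard basis of $\mathbb Q^n$, $e_i=\varepsilon_i-\frac1n(1,\dots,1)$; the character lattice $\mathfrak X(T)$ of the diagonal torus is identified with the $\mathbb Z$-span of $e_1,\dots,e_n$ inside $\{y\in\mathbb Q^n:\sum y_i=0\}$ (the $y_i$ are the "usual coordinates"). $W=S_n$ acts by permuting coordinates. A weight is dominant if $y_1\ge y_2\ge\dots\ge y_n$. The root lattice is $\Phi=\{\sum a_ie_i\mid a_i\in\mathbb Z,\ \sum a_i\equiv0\pmod n\}$. For a dominant weight $\lambda$, $M(\lambda)=\mathrm{conv}\{w\lambda\mid w\in W\}\cap(\lambda+\Phi)$. A finite set is saturated if $\mathbb Z_+(v_1,\dots,v_m)=\mathbb Z(v_1,\dots,v_m)\cap\mathbb Q_+(v_1,\dots,v_m)$ (combinations with non-negative integer, integer, non-negative rational coefficients), non-saturated otherwise. *)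

theory Defs
  imports Complex_Main "HOL-Combinatorics.Permutations"
begin

text \<open>Vectors of Q^n are modelled as functions nat => rat, with coordinates
  y 0, ..., y (n-1) (the usual coordinates y_1,...,y_n) and value 0 outside {..<n}.\<close>

definition lincomb :: "('v \<Rightarrow> rat) \<Rightarrow> 'v set \<Rightarrow> ('v \<Rightarrow> nat \<Rightarrow> rat) \<Rightarrow> nat \<Rightarrow> rat" where
  "lincomb c S f = (\<lambda>j. \<Sum>v\<in>S. c v * f v j)"

definition evec :: "nat \<Rightarrow> nat \<Rightarrow> nat \<Rightarrow> rat" where
  "evec n i = (\<lambda>j. if j < n then (if j = i then 1 else 0) - 1 / of_nat n else 0)"

definition char_lattice :: "nat \<Rightarrow> (nat \<Rightarrow> rat) set" where
  "char_lattice n = {lincomb (\<lambda>i. of_int (a i)) {..<n} (evec n) | a :: nat \<Rightarrow> int. True}"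

definition root_lattice :: "nat \<Rightarrow> (nat \<Rightarrow> rat) set" where
  "root_lattice n = {lincomb (\<lambda>i. of_int (a i)) {..<n} (evec n) | a :: nat \<Rightarrow> int.
                        (\<Sum>i<n. a i) mod int n = 0}"

definition dominant :: "nat \<Rightarrow> (nat \<Rightarrow> rat) \<Rightarrow> bool" where
  "dominant n y \<longleftrightarrow> (\<forall>i j. i \<le> j \<and> j < n \<longrightarrow> y j \<le> y i)"

definition weyl_act :: "nat \<Rightarrow> (nat \<Rightarrow> nat) \<Rightarrow> (nat \<Rightarrow> rat) \<Rightarrow> nat \<Rightarrow> rat" where
  "weyl_act n \<sigma> y = (\<lambda>j. if j < n then y (inv \<sigma> j) else 0)"

definition weyl_orbit :: "nat \<Rightarrow> (nat \<Rightarrow> rat) \<Rightarrow> (nat \<Rightarrow> rat) set" where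
  "weyl_orbit n y = {weyl_act n \<sigma> y | \<sigma>. \<sigma> permutes {..<n}}"

text \<open>Convex hull (over Q; for rational points this is the rational part of the real hull).\<close>
definition conv_hull :: "(nat \<Rightarrow> rat) set \<Rightarrow> (nat \<Rightarrow> rat) set" where
  "conv_hull A = {lincomb c S id | c S. finite S \<and> S \<subseteq> A \<and> (\<forall>v\<in>S. 0 \<le> c v) \<and> sum c S = 1}"

definition M_set :: "nat \<Rightarrow> (nat \<Rightarrow> rat) \<Rightarrow> (nat \<Rightarrow> rat) set" where
  "M_set n lam = conv_hull (weyl_orbit n lam) \<inter> {(\<lambda>j. lam j + p j) | p. p \<in> root_lattice n}"

definition Zplus_span :: "(nat \<Rightarrow> rat) set \<Rightarrow> (nat \<Rightarrow> rat) set" where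
  "Zplus_span V = {lincomb (\<lambda>v. of_nat (c v)) V id | c :: (nat \<Rightarrow> rat) \<Rightarrow> nat. True}"

definition Z_span :: "(nat \<Rightarrow> rat) set \<Rightarrow> (nat \<Rightarrow> rat) set" where
  "Z_span V = {lincomb (\<lambda>v. of_int (c v)) V id | c :: (nat \<Rightarrow> rat) \<Rightarrow> int. True}"

definition Qplus_span :: "(nat \<Rightarrow> rat) set \<Rightarrow> (nat \<Rightarrow> rat) set" where
  "Qplus_span V = {lincomb c V id | c. \<forall>v\<in>V. 0 \<le> c v}"

definition saturated :: "(nat \<Rightarrow> rat) set \<Rightarrow> bool" where
  "saturated V \<longleftrightarrow> Zplus_span V = Z_span V \<inter> Qplus_span V"

end

theory Submission
  imports Defs
begin

(* Let lambda have entries a+1, a, a-1 at distinct positions i, j, k.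
   Rearranging these three entries gives four points of the Weyl orbit
     P1 = (a+1, a, a-1),  P2 = (a+1, a-1, a),  P3 = (a, a-1, a+1),  P4 = (a-1, a, a+1)
   (all other coordinates unchanged), and every orbit point lies in M(lambda), because a
   permuted weight differs from lambda by an element of the root lattice.  The point
   C = (a, a, a) satisfies C = P1 - P2 + P3 and C = (P1 + P4)/2, so it lies in the
   integer span and in the rational cone of S = {P1,...,P4}.  Comparing coordinates
   i, j, k shows that the only rational solution of C = c1 P1 + ... + c4 P4 with
   c2, c3 >= 0 is c2 = c3 = 0, c1 = c4 = 1/2, provided a <> 0; hence C is not a
   non-negative integer combination and S is not saturated. *)

lemma lincomb_evec_apply:
  fixes a :: "nat \<Rightarrow> int"
  shows "lincomb (\<lambda>i. of_int (a i)) {..<n} (evec n) t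
       = (if t < n then of_int (a t) - of_int (\<Sum>i<n. a i) / of_nat n else 0)"
proof (cases "t < n")
  case True
  have "lincomb (\<lambda>i. of_int (a i)) {..<n} (evec n) t
      = (\<Sum>i<n. of_int (a i) * (if t = i then 1 else 0)) - (\<Sum>i<n. of_int (a i)) / of_nat n"
    using True by (simp add: lincomb_def evec_def right_diff_distrib sum_subtractf sum_divide_distrib)
  with True show ?thesis by (simp add: if_distrib cong: if_cong)
qed (simp add: lincomb_def evec_def)

lemma int_vector_in_root_lattice:
  fixes d :: "nat \<Rightarrow> int"
  assumes "(\<Sum>t<n. d t) = 0"
  shows "(\<lambda>t. if t < n then of_int (d t) else 0) \<in> root_lattice n"
proof -
  have "lincomb (\<lambda>i. of_int (d i)) {..<n} (evec n) = (\<lambda>t. if t < n then of_int (d t) else 0)"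
    using assms by (simp add: lincomb_evec_apply fun_eq_iff)
  then show ?thesis
    unfolding root_lattice_def using assms by (intro CollectI exI[of _ d]) auto
qed

text \<open>Every point of the Weyl orbit of a weight lambda belongs to M(lambda): it lies in
  the convex hull trivially, and it differs from lambda by a root-lattice vector, since
  permuting the integer coordinates of lambda w.r.t. the e_i preserves their sum.\<close>
lemma permuted_weight_in_M:
  assumes "\<tau> permutes {..<n}" and "lam \<in> char_lattice n"
  shows "(\<lambda>t. if t < n then lam (\<tau> t) else 0) \<in> M_set n lam"
proof -
  let ?w = "\<lambda>t. if t < n then lam (\<tau> t) else 0"
  obtain a :: "nat \<Rightarrow> int" where lam: "lam = lincomb (\<lambda>i. of_int (a i)) {..<n} (evec n)"
    using assms(2) unfolding char_lattice_def by blast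
  have "?w = weyl_act n (inv \<tau>) lam"
    unfolding weyl_act_def inv_inv_eq[OF permutes_bij[OF assms(1)]] by simp
  then have "?w \<in> weyl_orbit n lam"
    unfolding weyl_orbit_def using permutes_inv[OF assms(1)] by blast
  then have hull: "?w \<in> conv_hull (weyl_orbit n lam)"
    unfolding conv_hull_def by (intro CollectI exI[of _ "\<lambda>_. 1"] exI[of _ "{?w}"]) (auto simp: lincomb_def)
  define d where "d t = a (\<tau> t) - a t" for t
  have "(\<Sum>t<n. a (\<tau> t)) = (\<Sum>t<n. a t)"
    using sum.permute[OF assms(1), of a] by (simp add: comp_def)
  then have "(\<Sum>t<n. d t) = 0"
    by (simp add: d_def sum_subtractf)
  then have root: "(\<lambda>t. if t < n then of_int (d t) else 0) \<in> root_lattice n"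
    by (rule int_vector_in_root_lattice)
  have "\<tau> t < n" if "t < n" for t
    using permutes_in_image[OF assms(1)] that by simp
  then have "?w = (\<lambda>t. lam t + (if t < n then of_int (d t) else 0))"
    by (simp add: lam lincomb_evec_apply d_def fun_eq_iff)
  with root have "?w \<in> {(\<lambda>t. lam t + p t) | p. p \<in> root_lattice n}"
    by (intro CollectI exI[of _ "\<lambda>t. if t < n then of_int (d t) else 0"]) simp
  with hull show ?thesis unfolding M_set_def by blast
qed

lemma permuted_triple_in_M:
  assumes "lam \<in> char_lattice n" and "i < n" "j < n" "k < n"
    and "\<tau> permutes {i, j, k}"
  shows "lam(i := lam (\<tau> i), j := lam (\<tau> j), k := lam (\<tau> k)) \<in> M_set n lam"
proof -
  have perm: "\<tau> permutes {..<n}"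
    using assms(2-5) by (auto intro: permutes_subset)
  have outside: "lam t = 0" if "t \<ge> n" for t
    using assms(1) that by (auto simp: char_lattice_def lincomb_evec_apply)
  have "(\<lambda>t. if t < n then lam (\<tau> t) else 0) = lam(i := lam (\<tau> i), j := lam (\<tau> j), k := lam (\<tau> k))"
    using assms(2-4) outside permutes_not_in[OF assms(5)] by (auto simp: fun_eq_iff)
  with permuted_weight_in_M[OF perm assms(1)] show ?thesis by simp
qed

lemma lincomb_four:
  assumes "distinct [p1, p2, p3, p4]"
  shows "lincomb f {p1, p2, p3, p4} id t = f p1 * p1 t + f p2 * p2 t + f p3 * p3 t + f p4 * p4 t"
  using assms by (simp add: lincomb_def add.assoc)

text \<open>The arithmetic core: comparing coordinates i, j, k of C = (a,a,a) with a
  non-negative integer combination of P1, ..., P4 is impossible when a is non-zero,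
  since the unique rational solution has c1 = c4 = 1/2.\<close>
lemma no_nat_coefficients:
  fixes a :: rat and c1 c2 c3 c4 :: nat
  assumes "a \<noteq> 0"
    and ei: "a = of_nat c1 * (a + 1) + of_nat c2 * (a + 1) + of_nat c3 * a + of_nat c4 * (a - 1)"
    and ej: "a = of_nat c1 * a + of_nat c2 * (a - 1) + of_nat c3 * (a - 1) + of_nat c4 * a"
    and ek: "a = of_nat c1 * (a - 1) + of_nat c2 * a + of_nat c3 * (a + 1) + of_nat c4 * (a + 1)"
  shows False
proof -
  have "3 * a * (1 - (of_nat c1 + of_nat c2 + of_nat c3 + of_nat c4)) = 0"
    using ei ej ek by (simp add: algebra_simps)
  with assms(1) have total: "of_nat c1 + of_nat c2 + of_nat c3 + of_nat c4 = (1 :: rat)"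
    by simp
  have "a = a * (of_nat c1 + of_nat c2 + of_nat c3 + of_nat c4) - of_nat c2 - of_nat c3"
    using ej by (simp add: algebra_simps)
  with total have "c2 = 0" "c3 = 0"
    by simp_all
  moreover have "a = a * (of_nat c1 + of_nat c2 + of_nat c3 + of_nat c4) + of_nat c1 + of_nat c2 - of_nat c4"
    using ei by (simp add: algebra_simps)
  ultimately have "2 * (of_nat c1 :: rat) = 1"
    using total by simp
  then have "2 * c1 = 1"
    by (metis of_nat_1 of_nat_eq_iff of_nat_mult of_nat_numeral)
  then show False by presburger
qed

lemma rearranged_triple_not_saturated:
  fixes v :: "nat \<Rightarrow> rat" and a :: rat
  assumes "distinct [i, j, k]" and "a \<noteq> 0"
  defines "P x y z \<equiv> v(i := x, j := y, k := z)"
  shows "\<not> saturated {P (a+1) a (a-1), P (a+1) (a-1) a, P a (a-1) (a+1), P (a-1) a (a+1)}"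
    (is "\<not> saturated {?P1, ?P2, ?P3, ?P4}")
proof -
  let ?S = "{?P1, ?P2, ?P3, ?P4}"
  let ?C = "P a a a"
  have at: "P x y z i = x" "P x y z j = y" "P x y z k = z" for x y z
    using assms(1) by (auto simp: P_def)
  have off: "P x y z t = v t" if "t \<notin> {i, j, k}" for x y z t
    using that by (simp add: P_def)
  have dist: "distinct [?P1, ?P2, ?P3, ?P4]"
  proof -
    have inj: "P x y z = P x' y' z' \<Longrightarrow> x = x' \<and> y = y' \<and> z = z'" for x y z x' y' z'
      by (metis at)
    show ?thesis by (auto dest: inj)
  qed
  have eval: "lincomb f ?S id t = f ?P1 * ?P1 t + f ?P2 * ?P2 t + f ?P3 * ?P3 t + f ?P4 * ?P4 t" for f t
    by (rule lincomb_four[OF dist])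
  have in_Z: "?C \<in> Z_span ?S"
  proof -
    define c where "c p = (if p = ?P1 then 1 else if p = ?P2 then -1 else if p = ?P3 then 1 else 0 :: int)"
      for p
    have coeff: "c ?P1 = 1" "c ?P2 = -1" "c ?P3 = 1" "c ?P4 = 0"
      using dist by (auto simp: c_def)
    have "lincomb (\<lambda>p. of_int (c p)) ?S id t = ?C t" for t
      unfolding eval coeff by (cases "t \<in> {i, j, k}") (auto simp: at off)
    then have "lincomb (\<lambda>p. of_int (c p)) ?S id = ?C" ..
    then show ?thesis unfolding Z_span_def by (intro CollectI exI[of _ c]) simp
  qed
  have in_Q: "?C \<in> Qplus_span ?S"
  proof -
    define c where "c p = (if p = ?P1 \<or> p = ?P4 then 1/2 else 0 :: rat)" for p
    have coeff: "c ?P1 = 1/2" "c ?P2 = 0" "c ?P3 = 0" "c ?P4 = 1/2"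
      using dist by (auto simp: c_def)
    have "lincomb c ?S id t = ?C t" for t
      unfolding eval coeff by (cases "t \<in> {i, j, k}") (auto simp: at off field_simps)
    then have "lincomb c ?S id = ?C" ..
    moreover have "\<forall>p\<in>?S. 0 \<le> c p" by (simp add: c_def)
    ultimately show ?thesis unfolding Qplus_span_def by (intro CollectI exI[of _ c]) simp
  qed
  have "?C \<notin> Zplus_span ?S"
  proof
    assume "?C \<in> Zplus_span ?S"
    then obtain c :: "(nat \<Rightarrow> rat) \<Rightarrow> nat" where c: "?C = lincomb (\<lambda>p. of_nat (c p)) ?S id"
      unfolding Zplus_span_def by blast
    have "?C t = of_nat (c ?P1) * ?P1 t + of_nat (c ?P2) * ?P2 t
               + of_nat (c ?P3) * ?P3 t + of_nat (c ?P4) * ?P4 t" for t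
      unfolding c eval by simp
    from this[of i] this[of j] this[of k] show False
      by (intro no_nat_coefficients[OF assms(2)]) (simp_all add: at)
  qed
  with in_Z in_Q show ?thesis unfolding saturated_def by blast
qed

lemma rearranged_triple_in_M:
  assumes "lam \<in> char_lattice n" and ijk: "i < n" "j < n" "k < n" and "distinct [i, j, k]"
    and li: "lam i = a + 1" and lj: "lam j = a" and lk: "lam k = a - 1"
  defines "P x y z \<equiv> lam(i := x, j := y, k := z)"
  shows "{P (a+1) a (a-1), P (a+1) (a-1) a, P a (a-1) (a+1), P (a-1) a (a+1)} \<subseteq> M_set n lam"
proof -
  have swaps: "transpose j k i = i" "transpose i k j = j" "transpose i j k = k"
    using assms(5) by auto
  have in_M: "P (lam (\<tau> i)) (lam (\<tau> j)) (lam (\<tau> k)) \<in> M_set n lam"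
    if "\<tau> permutes {i, j, k}" for \<tau>
    unfolding P_def using permuted_triple_in_M[OF assms(1) ijk that] .
  have "P (a+1) a (a-1) \<in> M_set n lam"
    using in_M[OF permutes_id] by (simp add: li lj lk)
  moreover have "P (a+1) (a-1) a \<in> M_set n lam"
    using in_M[of "transpose j k"] by (simp add: li lj lk swaps permutes_swap_id)
  moreover have "P a (a-1) (a+1) \<in> M_set n lam"
    using in_M[of "transpose i j \<circ> transpose j k"]
    by (simp add: li lj lk swaps permutes_swap_id permutes_compose)
  moreover have "P (a-1) a (a+1) \<in> M_set n lam"
    using in_M[of "transpose i k"] by (simp add: li lj lk swaps permutes_swap_id)
  ultimately show ?thesis by simp
qed

text \<open>Main result.  Only the non-integrality of the coordinates and the presence of the
  three values a+1, a, a-1 are needed.\<close>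
theorem lemma8:
  fixes n :: nat and lam :: "nat \<Rightarrow> rat"
  assumes "n \<ge> 4"
    and "lam \<in> char_lattice n"
    and "dominant n lam"
    and "\<forall>i<n. lam i \<notin> \<int>"
    and "\<exists>\<alpha>::real. \<exists>i<n. \<exists>j<n. \<exists>k<n. of_rat (lam i) = \<alpha> + 1 \<and> of_rat (lam j) = \<alpha>
            \<and> of_rat (lam k) = \<alpha> - 1"
  shows "\<exists>S. finite S \<and> S \<subseteq> M_set n lam \<and> \<not> saturated S"
proof -
  obtain \<alpha> :: real and i j k where ijk: "i < n" "j < n" "k < n"
    and \<alpha>: "of_rat (lam i) = \<alpha> + 1" "of_rat (lam j) = \<alpha>" "of_rat (lam k) = \<alpha> - 1"
    using assms(5) by blast
  define a where "a = lam j"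
  have li: "lam i = a + 1"
    using \<alpha> unfolding a_def by (metis of_rat_add of_rat_1 of_rat_eq_iff)
  have lk: "lam k = a - 1"
    using \<alpha> unfolding a_def by (metis of_rat_diff of_rat_1 of_rat_eq_iff)
  have lj: "lam j = a"
    by (simp add: a_def)
  have "a \<noteq> 0"
    using assms(4) ijk(2) unfolding a_def by fastforce
  have dist: "distinct [i, j, k]"
    using li lj lk by auto
  define P where "P x y z = lam(i := x, j := y, k := z)" for x y z
  let ?S = "{P (a+1) a (a-1), P (a+1) (a-1) a, P a (a-1) (a+1), P (a-1) a (a+1)}"
  have "?S \<subseteq> M_set n lam"
    using rearranged_triple_in_M[OF assms(2) ijk dist li lj lk] by (simp add: P_def)
  moreover have "\<not> saturated ?S"
    using rearranged_triple_not_saturated[OF dist \<open>a \<noteq> 0\<close>, of lam] by (simp add: P_def)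
  moreover have "finite ?S"
    by simp
  ultimately show ?thesis by blast
qed

end
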